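(* Consider the online fair-division setting with deterministic feedback and the mechanism $\mathcal{M}_4$ described in the context. If all agents report truthfully, then $L_T\le 1+2n\,v_{\max}\rho_{\max}$ for all $T\ge 1$, and for every agent $i$ and every $T\ge1$, $U^e_{iT}-U_{iT}\le L_i\rho_{\max}$.
   Context: Resource and MMF: a divisible resource of size $1$ is shared by $n$ agents with entitlements $e_i>0$, $\sum_ie_i=1$. MMF$(e,d)$ on reported demands $d_1,\dots,d_n\ge0$: set $r=1$, $E=1$, $S=\{1,\dots,n\}$, $a=0$; process agents $j$ in ascending order of $d_j/e_j$; if $d_j<re_j/E$, set $a_j=d_j$, remove $j$ from $S$, $r\leftarrow r-d_j$, $E\leftarrow E-e_j$ and continue; otherwise set $a_k=re_k/E$ for all $k\in S$ and stop; output $a$. Online model: rounds $t=1,2,\dots$; agent $i$ has load $v_{it}\in(v_{\min},v_{\max}]$ ($v_{\min}>0$, fixed sequence), unknown non-decreasing payoff $f_i$, threshold $\alpha_i$, unit demand $\rho_i=f_i^{-1}(\alpha_i)\in[0,\rho_{\max}]$ ($\rho_{\max}$ known, $v_{\max}\rho_{\max}\le1$), true demand $d^*_{it}=v_{it}\rho_i$. Utility $u_i$ (of allocation per unit load) is strictly increasing on $[0,\rho_i]$, constant on $[\rho_i,\infty)$, $L_i$-Lipschitz. Deterministic feedback: receiving $a_{it}$ gives reward $X_{it}=f_i(a_{it}/v_{it})$. Mechanism $\mathcal{M}_4$: keep bounds $(\underline\rho_i,\bar\rho_i)$ initialised to $(0,\rho_{\max})$. The update with a pair $(x,X)$ is: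 if $X<\alpha_i$ set $\underline\rho_i\leftarrow\max(\underline\rho_i,x)$, else $\bar\rho_i\leftarrow\min(\bar\rho_i,x)$. Round 1: allocate $e_i$ to each agent, collect $X_i$, update with $(a_i/v_i,X_i)$. Each round $t\ge2$: set $\hat\rho_i=(\underline\rho_i+\bar\rho_i)/2$, obtain loads $v_i$, compute $a=$MMF$(e,(v_i\hat\rho_i)_i)$, allocate $a$, collect rewards $X_i$ and update each agent with $(a_i/v_i,X_i)$. Quantities: $\ell_{ur}(a)=1-\sum_ia_i$, $\ell_{or}(d,a)=\sum_i(a_i-d_i)^+$, $\ell_{ud}(d,a)=\sum_i(d_i-a_i)^+$, $\ell=\min(\ell_{ur}+\ell_{or},\ell_{ud})$, $L_T=\sum_{t\le T}\ell(d^*_t,a_t)$; $U_{iT}=\sum_{t\le T}u_i(a_{it}/v_{it})$, $U^e_{iT}=\sum_{t\le T}u_i(e_i/v_{it})$. *)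

theory Defs
  imports "HOL-Analysis.Analysis"
begin

text \<open>Agents are indexed by 0..<n; rounds by t = 1, 2, ...
  Loads are v i t, entitlements e i.\<close>

text \<open>MMF: process the agents (list order = ascending d_j/e_j) with remaining
  resource r and remaining entitlement E; the remaining list is the set S.\<close>
fun mmf_aux :: "(nat \<Rightarrow> real) \<Rightarrow> (nat \<Rightarrow> real) \<Rightarrow> nat list \<Rightarrow> real \<Rightarrow> real \<Rightarrow> (nat \<Rightarrow> real)" where
  "mmf_aux e d [] r E = (\<lambda>k. 0)"
| "mmf_aux e d (j # js) r E =
     (if d j < r * e j / E
      then (mmf_aux e d js (r - d j) (E - e j))(j := d j)
      else (\<lambda>k. if k \<in> set (j # js) then r * e k / E else 0))"

text \<open>Ties in d_j/e_j are broken by agent index (stable sort).\<close>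
definition MMF :: "nat \<Rightarrow> (nat \<Rightarrow> real) \<Rightarrow> (nat \<Rightarrow> real) \<Rightarrow> (nat \<Rightarrow> real)" where
  "MMF n e d = mmf_aux e d (sort_key (\<lambda>j. d j / e j) [0..<n]) 1 1"

definition bound_upd :: "real \<Rightarrow> real \<times> real \<Rightarrow> real \<Rightarrow> real \<Rightarrow> real \<times> real" where
  "bound_upd \<alpha> B x X = (if X < \<alpha> then (max (fst B) x, snd B) else (fst B, min (snd B) x))"

definition m4_alloc :: "nat \<Rightarrow> (nat \<Rightarrow> real) \<Rightarrow> (nat \<Rightarrow> nat \<Rightarrow> real) \<Rightarrow> (nat \<Rightarrow> real \<times> real) \<Rightarrow> nat \<Rightarrow> (nat \<Rightarrow> real)" where
  "m4_alloc n e v B t =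
     (if t \<le> 1 then e else MMF n e (\<lambda>i. v i t * ((fst (B i) + snd (B i)) / 2)))"

text \<open>Bounds after t rounds, under truthful deterministic feedback X_i = f_i(a_i/v_i).\<close>
primrec m4_bounds :: "nat \<Rightarrow> (nat \<Rightarrow> real) \<Rightarrow> (nat \<Rightarrow> nat \<Rightarrow> real) \<Rightarrow> (nat \<Rightarrow> real \<Rightarrow> real)
    \<Rightarrow> (nat \<Rightarrow> real) \<Rightarrow> real \<Rightarrow> nat \<Rightarrow> (nat \<Rightarrow> real \<times> real)" where
  "m4_bounds n e v f \<alpha> \<rho>max 0 = (\<lambda>i. (0, \<rho>max))"
| "m4_bounds n e v f \<alpha> \<rho>max (Suc t) =
     (let B = m4_bounds n e v f \<alpha> \<rho>max t;
          a = m4_alloc n e v B (Suc t)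
      in (\<lambda>i. bound_upd (\<alpha> i) (B i) (a i / v i (Suc t)) (f i (a i / v i (Suc t)))))"

definition m4_allocation :: "nat \<Rightarrow> (nat \<Rightarrow> real) \<Rightarrow> (nat \<Rightarrow> nat \<Rightarrow> real) \<Rightarrow> (nat \<Rightarrow> real \<Rightarrow> real)
    \<Rightarrow> (nat \<Rightarrow> real) \<Rightarrow> real \<Rightarrow> nat \<Rightarrow> (nat \<Rightarrow> real)" where
  "m4_allocation n e v f \<alpha> \<rho>max t = m4_alloc n e v (m4_bounds n e v f \<alpha> \<rho>max (t - 1)) t"

definition loss_ur :: "nat \<Rightarrow> (nat \<Rightarrow> real) \<Rightarrow> real" where
  "loss_ur n a = 1 - (\<Sum>i<n. a i)"
definition loss_or :: "nat \<Rightarrow> (nat \<Rightarrow> real) \<Rightarrow> (nat \<Rightarrow> real) \<Rightarrow> real" where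
  "loss_or n d a = (\<Sum>i<n. max (a i - d i) 0)"
definition loss_ud :: "nat \<Rightarrow> (nat \<Rightarrow> real) \<Rightarrow> (nat \<Rightarrow> real) \<Rightarrow> real" where
  "loss_ud n d a = (\<Sum>i<n. max (d i - a i) 0)"
definition loss :: "nat \<Rightarrow> (nat \<Rightarrow> real) \<Rightarrow> (nat \<Rightarrow> real) \<Rightarrow> real" where
  "loss n d a = min (loss_ur n a + loss_or n d a) (loss_ud n d a)"

end

(*
  Under truthful feedback each agent's bracket (lower, upper bound) always contains its unit
  demand rho_i, and from round 2 on the bracket width drops by at least the agent's allocation
  error per unit load: MMF never exceeds a reported demand, so an allocation above rho_i is at most
  the midpoint and becomes the new upper bound; an allocation equal to the reported midpoint moves
  the bound on the far side of rho_i to it.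
  MMF either satisfies every reported demand (the loss is then at most the total shortfall) or
  exhausts the resource (the loss is then the total excess), so the loss of a round is at most
  v_max times the total width drop, and the losses telescope to 1 + n v_max rho_max.
  An agent that gets less than its entitlement is fully satisfied, so by the Lipschitz bound its
  utility deficit in a round is at most L_i times its width drop, which telescopes to L_i rho_max.
*)
theory Submission
  imports Defs
begin

section \<open>Max-min fairness\<close>

lemma sum_proportional_shares:
  fixes e :: "'a \<Rightarrow> real"
  assumes "E = (\<Sum>k\<in>A. e k)" "E \<noteq> 0"
  shows "(\<Sum>k\<in>A. r * e k / E) = r"
  using assms by (simp add: sum_divide_distrib[symmetric] sum_distrib_left[symmetric])

lemma mmf_aux_between:
  assumes "distinct js" "sorted (map (\<lambda>j. d j / e j) js)" "\<forall>k\<in>set js. 0 < e k"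
    "E = (\<Sum>k\<in>set js. e k)" "E \<le> r" "k \<in> set js"
  shows "min (e k) (d k) \<le> mmf_aux e d js r E k \<and> mmf_aux e d js r E k \<le> d k"
  using assms
proof (induction js arbitrary: r E)
  case Nil
  then show ?case by simp
next
  case (Cons j js)
  define E' where "E' = (\<Sum>k\<in>set js. e k)"
  have j_notin: "j \<notin> set js" and e_j: "0 < e j" and E': "0 \<le> E'"
    using Cons.prems(1,3) unfolding E'_def by (auto intro: sum_nonneg less_imp_le)
  have E: "E = e j + E'" using Cons.prems(4) j_notin by (simp add: E'_def)
  show ?case
  proof (cases "d j < r * e j / E")
    case True
    have "E * E' \<le> r * E'" using Cons.prems(5) E' by (rule mult_right_mono)
    then have "E' \<le> r * E' / E" using E e_j E' by (simp add: le_divide_eq mult.commute)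
    also have "r * E' / E = r - r * e j / E" using E e_j E' by (simp add: field_simps)
    finally have "E' \<le> r - d j" using True by linarith
    then have IH: "k \<in> set js \<Longrightarrow> min (e k) (d k) \<le> mmf_aux e d js (r - d j) E' k
        \<and> mmf_aux e d js (r - d j) E' k \<le> d k"
      using Cons.IH[of E' "r - d j"] Cons.prems(1-3) E'_def by auto
    show ?thesis using True IH Cons.prems(6) E by (auto simp: min_le_iff_disj)
  next
    case False
    have e_k: "0 < e k" using Cons.prems(3,6) by auto
    have "r / E \<le> d j / e j" using False e_j E E' by (simp add: field_simps)
    also have "d j / e j \<le> d k / e k" using Cons.prems(2,6) by auto
    finally have share_le_demand: "r * e k / E \<le> d k" using e_k by (simp add: field_simps)
    have "E * e k \<le> r * e k" using Cons.prems(5) e_k by (simp add: mult_right_mono)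
    then have "e k \<le> r * e k / E" using E e_j E' by (simp add: le_divide_eq mult.commute)
    with share_le_demand show ?thesis using False Cons.prems(6) by auto
  qed
qed

lemma mmf_aux_satisfies_or_exhausts:
  assumes "distinct js" "\<forall>k\<in>set js. 0 < e k" "E = (\<Sum>k\<in>set js. e k)"
  shows "(\<forall>k\<in>set js. mmf_aux e d js r E k = d k) \<or> (\<Sum>k\<in>set js. mmf_aux e d js r E k) = r"
  using assms
proof (induction js arbitrary: r E)
  case Nil
  then show ?case by simp
next
  case (Cons j js)
  have j_notin: "j \<notin> set js" using Cons.prems(1) by simp
  show ?case
  proof (cases "d j < r * e j / E")
    case True
    have "(\<forall>k\<in>set js. mmf_aux e d js (r - d j) (E - e j) k = d k)
        \<or> (\<Sum>k\<in>set js. mmf_aux e d js (r - d j) (E - e j) k) = r - d j"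
      using Cons.IH[of "E - e j"] Cons.prems j_notin by auto
    moreover have "(\<Sum>k\<in>set js. ((mmf_aux e d js (r - d j) (E - e j))(j := d j)) k)
        = (\<Sum>k\<in>set js. mmf_aux e d js (r - d j) (E - e j) k)"
      using j_notin by (intro sum.cong) auto
    ultimately show ?thesis using True j_notin by auto
  next
    case False
    have "0 < E" unfolding Cons.prems(3) using Cons.prems(2) by (intro sum_pos) auto
    then show ?thesis using False Cons.prems(3) sum_proportional_shares[of E e "set (j # js)" r]
      by auto
  qed
qed

lemma MMF_between:
  assumes "\<And>i. i < n \<Longrightarrow> 0 < e i" "(\<Sum>i<n. e i) = 1" "i < n"
  shows "min (e i) (d i) \<le> MMF n e d i \<and> MMF n e d i \<le> d i"
  using assms unfolding MMF_def
  by (intro mmf_aux_between) (auto simp: sorted_sort_key atLeast0LessThan)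

lemma MMF_satisfies_or_exhausts:
  assumes "\<And>i. i < n \<Longrightarrow> 0 < e i" "(\<Sum>i<n. e i) = 1"
  shows "(\<forall>i<n. MMF n e d i = d i) \<or> (\<Sum>i<n. MMF n e d i) = 1"
proof -
  have "set (sort_key (\<lambda>j. d j / e j) [0..<n]) = {..<n}" by auto
  then show ?thesis
    using mmf_aux_satisfies_or_exhausts[of "sort_key (\<lambda>j. d j / e j) [0..<n]" e 1 d 1] assms
    unfolding MMF_def by auto
qed

section \<open>Bisection brackets and capped utilities\<close>

definition bracket_mid :: "real \<times> real \<Rightarrow> real" where
  "bracket_mid B = (fst B + snd B) / 2"

definition bracket_width :: "real \<times> real \<Rightarrow> real" where
  "bracket_width B = snd B - fst B"

lemma below_threshold_iff:
  fixes F :: "real \<Rightarrow> real"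
  assumes "mono_on {0..} F" "F \<rho> = \<alpha>" "\<And>y. 0 \<le> y \<Longrightarrow> y < \<rho> \<Longrightarrow> F y < \<alpha>" "0 \<le> \<rho>" "0 \<le> x"
  shows "F x < \<alpha> \<longleftrightarrow> x < \<rho>"
proof
  assume "F x < \<alpha>"
  show "x < \<rho>"
  proof (rule ccontr)
    assume "\<not> x < \<rho>"
    then have "F \<rho> \<le> F x" using assms by (intro mono_onD[OF assms(1)]) auto
    with \<open>F x < \<alpha>\<close> assms(2) show False by simp
  qed
qed (use assms in auto)

lemma fst_bound_upd_ge: "fst B \<le> fst (bound_upd \<alpha> B x X)"
  and snd_bound_upd_le: "snd (bound_upd \<alpha> B x X) \<le> snd B"
  by (auto simp: bound_upd_def)

lemma bracket_width_bound_upd_le: "bracket_width (bound_upd \<alpha> B x X) \<le> bracket_width B"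
  using fst_bound_upd_ge[of B \<alpha> x X] snd_bound_upd_le[of \<alpha> B x X]
  unfolding bracket_width_def by linarith

lemma bound_upd_brackets:
  assumes "X < \<alpha> \<longleftrightarrow> x < \<rho>" "fst B \<le> \<rho>" "\<rho> \<le> snd B"
  shows "fst (bound_upd \<alpha> B x X) \<le> \<rho> \<and> \<rho> \<le> snd (bound_upd \<alpha> B x X)"
  using assms by (auto simp: bound_upd_def)

lemma bound_upd_overshoot:
  assumes "X < \<alpha> \<longleftrightarrow> x < \<rho>" "fst B \<le> \<rho>" "x \<le> bracket_mid B"
  shows "max (x - \<rho>) 0 \<le> bracket_width B - bracket_width (bound_upd \<alpha> B x X)"
proof (cases "x < \<rho>")
  case True
  then show ?thesis using bracket_width_bound_upd_le[of \<alpha> B x X] by simp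
next
  case False
  then have upd: "bound_upd \<alpha> B x X = (fst B, min (snd B) x)" using assms(1) by (simp add: bound_upd_def)
  show ?thesis unfolding upd using False assms(2,3) unfolding bracket_mid_def bracket_width_def by simp
qed

lemma bound_upd_at_mid:
  assumes "X < \<alpha> \<longleftrightarrow> x < \<rho>" "fst B \<le> \<rho>" "\<rho> \<le> snd B" "x = bracket_mid B"
  shows "\<bar>x - \<rho>\<bar> \<le> bracket_width B - bracket_width (bound_upd \<alpha> B x X)"
proof (cases "x < \<rho>")
  case True
  then have upd: "bound_upd \<alpha> B x X = (max (fst B) x, snd B)" using assms(1) by (simp add: bound_upd_def)
  show ?thesis unfolding upd using True assms(2-4) unfolding bracket_mid_def bracket_width_def by simp
next
  case False
  then have upd: "bound_upd \<alpha> B x X = (fst B, min (snd B) x)" using assms(1) by (simp add: bound_upd_def)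
  show ?thesis unfolding upd using False assms(2-4) unfolding bracket_mid_def bracket_width_def by simp
qed

lemma mono_on_if_strict_mono_on_then_const:
  fixes g :: "real \<Rightarrow> real"
  assumes "strict_mono_on {0..r} g" "\<And>x. r \<le> x \<Longrightarrow> g x = g r"
  shows "mono_on {0..} g"
proof (rule mono_onI)
  fix a b :: real assume ab: "a \<in> {0..}" "b \<in> {0..}" "a \<le> b"
  have mono: "mono_on {0..r} g" using assms(1) by (rule strict_mono_on_imp_mono_on)
  show "g a \<le> g b"
  proof (cases "b \<le> r")
    case True
    with ab show ?thesis by (intro mono_onD[OF mono]) auto
  next
    case False
    then have "g b = g r" using assms(2)[of b] by simp
    moreover have "g a \<le> g r"
    proof (cases "a \<le> r")
      case True
      with ab show ?thesis by (intro mono_onD[OF mono]) auto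
    qed (use assms(2)[of a] in simp)
    ultimately show ?thesis by simp
  qed
qed

lemma capped_lipschitz_gap:
  fixes g :: "real \<Rightarrow> real"
  assumes "mono_on {0..} g" "\<And>x. r \<le> x \<Longrightarrow> g x = g r" "lipschitz_on K {0..} g"
    "0 \<le> r" "0 \<le> x" "0 \<le> y"
  shows "g y - g x \<le> K * max (min y r - x) 0"
proof -
  define m where "m = min y r"
  have "g y \<le> g m"
    unfolding m_def using assms(2)[of y] by (cases "y \<le> r") auto
  moreover have "g m - g x \<le> K * max (m - x) 0"
  proof (cases "m \<le> x")
    case True
    with assms(4-6) have "g m \<le> g x" unfolding m_def by (intro mono_onD[OF assms(1)]) auto
    then show ?thesis using True by simp
  next
    case False
    have "dist (g m) (g x) \<le> K * dist m x"
      using lipschitz_onD[OF assms(3)] assms(4-6) unfolding m_def by simp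
    then show ?thesis using False by (simp add: dist_real_def)
  qed
  ultimately show ?thesis unfolding m_def by simp
qed

lemma sum_le_first_plus_telescope:
  fixes c W :: "nat \<Rightarrow> real"
  assumes "\<And>t. 1 \<le> t \<Longrightarrow> c (Suc t) \<le> W t - W (Suc t)" "1 \<le> T"
  shows "(\<Sum>t=1..T. c t) \<le> c 1 + (W 1 - W T)"
  using assms(2)
proof (induction T rule: nat_induct_at_least)
  case (Suc T)
  then show ?case using assms(1)[of T] by simp
qed simp

lemma max_diff_scale:
  fixes a b c :: real
  assumes "0 < c"
  shows "max (a - b) 0 = c * max (a / c - b / c) 0"
  using assms by (auto simp: max_def field_simps)

section \<open>The mechanism under truthful feedback\<close>

locale truthful_m4 =
  fixes n :: nat and e :: "nat \<Rightarrow> real" and v :: "nat \<Rightarrow> nat \<Rightarrow> real" and vmax \<rho>max :: real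
    and f :: "nat \<Rightarrow> real \<Rightarrow> real" and \<alpha> \<rho> :: "nat \<Rightarrow> real"
  assumes e_pos: "i < n \<Longrightarrow> 0 < e i"
    and e_sum: "(\<Sum>i<n. e i) = 1"
    and v_pos: "i < n \<Longrightarrow> 1 \<le> t \<Longrightarrow> 0 < v i t"
    and v_le_vmax: "i < n \<Longrightarrow> 1 \<le> t \<Longrightarrow> v i t \<le> vmax"
    and f_mono: "i < n \<Longrightarrow> mono_on {0..} (f i)"
    and rho_nonneg: "i < n \<Longrightarrow> 0 \<le> \<rho> i"
    and rho_le_max: "i < n \<Longrightarrow> \<rho> i \<le> \<rho>max"
    and f_rho: "i < n \<Longrightarrow> f i (\<rho> i) = \<alpha> i"
    and f_below_rho: "i < n \<Longrightarrow> 0 \<le> x \<Longrightarrow> x < \<rho> i \<Longrightarrow> f i x < \<alpha> i"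
begin

abbreviation bounds :: "nat \<Rightarrow> nat \<Rightarrow> real \<times> real" where
  "bounds \<equiv> m4_bounds n e v f \<alpha> \<rho>max"

abbreviation alloc :: "nat \<Rightarrow> nat \<Rightarrow> real" where
  "alloc \<equiv> m4_allocation n e v f \<alpha> \<rho>max"

abbreviation unit_alloc :: "nat \<Rightarrow> nat \<Rightarrow> real" where
  "unit_alloc t i \<equiv> alloc t i / v i t"

abbreviation width :: "nat \<Rightarrow> nat \<Rightarrow> real" where
  "width t i \<equiv> bracket_width (bounds t i)"

abbreviation reported :: "nat \<Rightarrow> nat \<Rightarrow> real" where
  "reported t i \<equiv> v i (Suc t) * bracket_mid (bounds t i)"

lemma alloc_first: "alloc 1 = e"
  by (simp add: m4_allocation_def m4_alloc_def)

lemma alloc_Suc: "1 \<le> t \<Longrightarrow> alloc (Suc t) = MMF n e (reported t)"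
  by (simp add: m4_allocation_def m4_alloc_def bracket_mid_def)

lemma bounds_Suc:
  "bounds (Suc t) i = bound_upd (\<alpha> i) (bounds t i) (unit_alloc (Suc t) i) (f i (unit_alloc (Suc t) i))"
  by (simp add: m4_allocation_def Let_def)

declare m4_bounds.simps(2) [simp del]

lemma feedback_below_iff: "i < n \<Longrightarrow> 0 \<le> x \<Longrightarrow> f i x < \<alpha> i \<longleftrightarrow> x < \<rho> i"
  using below_threshold_iff[OF f_mono f_rho f_below_rho rho_nonneg] by blast

lemma alloc_between:
  "1 \<le> t \<Longrightarrow> i < n \<Longrightarrow> min (e i) (reported t i) \<le> alloc (Suc t) i \<and> alloc (Suc t) i \<le> reported t i"
  using MMF_between[OF e_pos e_sum] alloc_Suc by simp

lemma fst_bounds_nonneg: "0 \<le> fst (bounds t i)"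
proof (induction t)
  case (Suc t)
  then show ?case unfolding bounds_Suc using fst_bound_upd_ge order_trans by blast
qed simp

lemma snd_bounds_le_max: "snd (bounds t i) \<le> \<rho>max"
proof (induction t)
  case (Suc t)
  then show ?case unfolding bounds_Suc using snd_bound_upd_le order_trans by blast
qed simp

lemma alloc_Suc_nonneg:
  assumes "i < n" "\<rho> i \<le> snd (bounds t i)"
  shows "0 \<le> alloc (Suc t) i"
proof (cases "t = 0")
  case True
  then show ?thesis using alloc_first e_pos[OF assms(1)] by simp
next
  case False
  have "0 \<le> bracket_mid (bounds t i)"
    using assms rho_nonneg[OF assms(1)] fst_bounds_nonneg[of t i] unfolding bracket_mid_def by simp
  then have "0 \<le> reported t i" using v_pos[OF assms(1), of "Suc t"] by simp
  then show ?thesis using alloc_between[of t i] e_pos[OF assms(1)] False assms(1) by linarith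
qed

lemma unit_alloc_Suc_nonneg:
  "i < n \<Longrightarrow> \<rho> i \<le> snd (bounds t i) \<Longrightarrow> 0 \<le> unit_alloc (Suc t) i"
  using alloc_Suc_nonneg v_pos[of i "Suc t"] by simp

lemma bounds_bracket_rho: "i < n \<Longrightarrow> fst (bounds t i) \<le> \<rho> i \<and> \<rho> i \<le> snd (bounds t i)"
proof (induction t)
  case 0
  then show ?case using rho_nonneg rho_le_max by simp
next
  case (Suc t)
  then show ?case unfolding bounds_Suc
    using feedback_below_iff unit_alloc_Suc_nonneg by (intro bound_upd_brackets) auto
qed

lemma width_nonneg: "i < n \<Longrightarrow> 0 \<le> width t i"
  using bounds_bracket_rho[of i t] unfolding bracket_width_def by linarith

lemma width_le_max: "width t i \<le> \<rho>max"
  using fst_bounds_nonneg[of t i] snd_bounds_le_max[of t i] unfolding bracket_width_def by simp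

lemma width_Suc_le: "width (Suc t) i \<le> width t i"
  unfolding bounds_Suc by (rule bracket_width_bound_upd_le)

lemma vmax_nonneg: "i < n \<Longrightarrow> 0 \<le> vmax"
  using v_pos[of i 1] v_le_vmax[of i 1] by simp

lemma n_vmax_rhomax_nonneg: "0 \<le> real n * vmax * \<rho>max"
proof (cases "n = 0")
  case False
  then show ?thesis using vmax_nonneg[of 0] rho_nonneg[of 0] rho_le_max[of 0] by simp
qed simp

lemma feedback_Suc_below_iff:
  "i < n \<Longrightarrow> f i (unit_alloc (Suc t) i) < \<alpha> i \<longleftrightarrow> unit_alloc (Suc t) i < \<rho> i"
  using feedback_below_iff unit_alloc_Suc_nonneg bounds_bracket_rho by blast

lemma overshoot_le_width_drop:
  assumes "1 \<le> t" "i < n"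
  shows "max (unit_alloc (Suc t) i - \<rho> i) 0 \<le> width t i - width (Suc t) i"
proof -
  have "unit_alloc (Suc t) i \<le> bracket_mid (bounds t i)"
    using alloc_between[OF assms] v_pos[OF assms(2), of "Suc t"] by (simp add: divide_le_eq mult.commute)
  with bounds_bracket_rho[OF assms(2)] show ?thesis
    unfolding bounds_Suc by (intro bound_upd_overshoot[OF feedback_Suc_below_iff[OF assms(2)]]) auto
qed

lemma error_le_width_drop_if_satisfied:
  assumes "i < n" "alloc (Suc t) i = reported t i"
  shows "\<bar>unit_alloc (Suc t) i - \<rho> i\<bar> \<le> width t i - width (Suc t) i"
proof -
  have "unit_alloc (Suc t) i = bracket_mid (bounds t i)"
    using assms v_pos[OF assms(1), of "Suc t"] by simp
  with bounds_bracket_rho[OF assms(1)] show ?thesis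
    unfolding bounds_Suc by (intro bound_upd_at_mid[OF feedback_Suc_below_iff[OF assms(1)]]) auto
qed

lemma excess_le_width_drop:
  assumes "1 \<le> t" "i < n"
  shows "max (alloc (Suc t) i - v i (Suc t) * \<rho> i) 0 \<le> vmax * (width t i - width (Suc t) i)"
proof -
  have v: "0 < v i (Suc t)" "v i (Suc t) \<le> vmax" using v_pos v_le_vmax assms(2) by auto
  have "max (alloc (Suc t) i - v i (Suc t) * \<rho> i) 0 = v i (Suc t) * max (unit_alloc (Suc t) i - \<rho> i) 0"
    using max_diff_scale[OF v(1), of "alloc (Suc t) i" "v i (Suc t) * \<rho> i"] v(1) by simp
  also have "\<dots> \<le> v i (Suc t) * (width t i - width (Suc t) i)"
    using overshoot_le_width_drop[OF assms] v(1) by (simp add: mult_left_mono)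
  also have "\<dots> \<le> vmax * (width t i - width (Suc t) i)"
    using width_Suc_le[of t i] v(2) by (simp add: mult_right_mono)
  finally show ?thesis .
qed

lemma shortfall_le_width_drop:
  assumes "1 \<le> t" "i < n" "alloc (Suc t) i = reported t i"
  shows "max (v i (Suc t) * \<rho> i - alloc (Suc t) i) 0 \<le> vmax * (width t i - width (Suc t) i)"
proof -
  have v: "0 < v i (Suc t)" "v i (Suc t) \<le> vmax" using v_pos v_le_vmax assms(2) by auto
  have "max (v i (Suc t) * \<rho> i - alloc (Suc t) i) 0 = v i (Suc t) * max (\<rho> i - unit_alloc (Suc t) i) 0"
    using max_diff_scale[OF v(1), of "v i (Suc t) * \<rho> i" "alloc (Suc t) i"] v(1) by simp
  also have "\<dots> \<le> v i (Suc t) * (width t i - width (Suc t) i)"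
    using error_le_width_drop_if_satisfied[OF assms(2,3)] v(1) by (intro mult_left_mono) auto
  also have "\<dots> \<le> vmax * (width t i - width (Suc t) i)"
    using width_Suc_le[of t i] v(2) by (simp add: mult_right_mono)
  finally show ?thesis .
qed

lemma loss_Suc_le:
  assumes "1 \<le> t"
  shows "loss n (\<lambda>i. v i (Suc t) * \<rho> i) (alloc (Suc t)) \<le> (\<Sum>i<n. vmax * (width t i - width (Suc t) i))"
  using MMF_satisfies_or_exhausts[OF e_pos e_sum, of "reported t"]
proof
  assume "\<forall>i<n. MMF n e (reported t) i = reported t i"
  then have "loss_ud n (\<lambda>i. v i (Suc t) * \<rho> i) (alloc (Suc t)) \<le> (\<Sum>i<n. vmax * (width t i - width (Suc t) i))"
    unfolding loss_ud_def using shortfall_le_width_drop assms alloc_Suc by (intro sum_mono) auto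
  then show ?thesis unfolding loss_def by simp
next
  assume "(\<Sum>i<n. MMF n e (reported t) i) = 1"
  then have "loss_ur n (alloc (Suc t)) = 0" using alloc_Suc[OF assms] by (simp add: loss_ur_def)
  moreover have "loss_or n (\<lambda>i. v i (Suc t) * \<rho> i) (alloc (Suc t)) \<le> (\<Sum>i<n. vmax * (width t i - width (Suc t) i))"
    unfolding loss_or_def using excess_le_width_drop assms by (intro sum_mono) auto
  ultimately show ?thesis unfolding loss_def by simp
qed

lemma loss_first_le: "loss n (\<lambda>i. v i 1 * \<rho> i) (alloc 1) \<le> 1"
proof -
  have "loss_or n (\<lambda>i. v i 1 * \<rho> i) e \<le> (\<Sum>i<n. e i)"
    unfolding loss_or_def using e_pos v_pos rho_nonneg by (intro sum_mono) (simp add: less_imp_le)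
  then show ?thesis using e_sum alloc_first unfolding loss_def loss_ur_def by simp
qed

lemma loss_sum_le:
  assumes "1 \<le> T"
  shows "(\<Sum>t=1..T. loss n (\<lambda>i. v i t * \<rho> i) (alloc t)) \<le> 1 + real n * vmax * \<rho>max"
proof -
  define W where "W t = (\<Sum>i<n. vmax * width t i)" for t
  have "(\<Sum>t=1..T. loss n (\<lambda>i. v i t * \<rho> i) (alloc t)) \<le> loss n (\<lambda>i. v i 1 * \<rho> i) (alloc 1) + (W 1 - W T)"
    using loss_Suc_le assms unfolding W_def
    by (intro sum_le_first_plus_telescope) (simp_all add: sum_subtractf right_diff_distrib)
  also have "W 1 - W T \<le> (\<Sum>i<n. vmax * \<rho>max)"
    unfolding W_def sum_subtractf[symmetric] right_diff_distrib[symmetric]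
  proof (intro sum_mono mult_left_mono)
    fix i assume "i \<in> {..<n}"
    then show "width 1 i - width T i \<le> \<rho>max" "0 \<le> vmax"
      using width_le_max[of 1 i] width_nonneg[of i T] vmax_nonneg by auto
  qed
  finally show ?thesis using loss_first_le by simp
qed

lemma utility_Suc_gap_le:
  fixes g :: "real \<Rightarrow> real"
  assumes "mono_on {0..} g" "\<And>x. \<rho> i \<le> x \<Longrightarrow> g x = g (\<rho> i)" "lipschitz_on K {0..} g"
    "1 \<le> t" "i < n"
  shows "g (e i / v i (Suc t)) - g (unit_alloc (Suc t) i) \<le> K * (width t i - width (Suc t) i)"
proof -
  let ?x = "unit_alloc (Suc t) i" and ?y = "e i / v i (Suc t)"
  have v: "0 < v i (Suc t)" using v_pos assms(5) by simp
  have x: "0 \<le> ?x" using unit_alloc_Suc_nonneg[OF assms(5)] bounds_bracket_rho[OF assms(5)] by blast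
  have y: "0 \<le> ?y" using e_pos[OF assms(5)] v by simp
  have "max (min ?y (\<rho> i) - ?x) 0 \<le> width t i - width (Suc t) i"
  proof (cases "e i \<le> alloc (Suc t) i")
    case True
    then have "?y \<le> ?x" using v by (simp add: divide_right_mono)
    then show ?thesis using width_Suc_le[of t i] by simp
  next
    case False
    then have "alloc (Suc t) i = reported t i" using alloc_between[OF assms(4,5)] by linarith
    then have "\<bar>?x - \<rho> i\<bar> \<le> width t i - width (Suc t) i"
      by (rule error_le_width_drop_if_satisfied[OF assms(5)])
    moreover have "min ?y (\<rho> i) - ?x \<le> \<bar>?x - \<rho> i\<bar>" by (simp add: min_def abs_if)
    ultimately show ?thesis using width_Suc_le[of t i] by simp
  qed
  then have "K * max (min ?y (\<rho> i) - ?x) 0 \<le> K * (width t i - width (Suc t) i)"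
    using lipschitz_on_nonneg[OF assms(3)] by (rule mult_left_mono)
  with capped_lipschitz_gap[OF assms(1-3) rho_nonneg[OF assms(5)] x y] show ?thesis by linarith
qed

lemma utility_gap_sum_le:
  fixes g :: "real \<Rightarrow> real"
  assumes "mono_on {0..} g" "\<And>x. \<rho> i \<le> x \<Longrightarrow> g x = g (\<rho> i)" "lipschitz_on K {0..} g"
    "i < n" "1 \<le> T"
  shows "(\<Sum>t=1..T. g (e i / v i t)) - (\<Sum>t=1..T. g (unit_alloc t i)) \<le> K * \<rho>max"
proof -
  have "(\<Sum>t=1..T. g (e i / v i t) - g (unit_alloc t i))
      \<le> (g (e i / v i 1) - g (unit_alloc 1 i)) + (K * width 1 i - K * width T i)"
    using utility_Suc_gap_le[OF assms(1-3) _ assms(4)] assms(5)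
    by (intro sum_le_first_plus_telescope) (simp_all add: right_diff_distrib)
  also have "\<dots> \<le> K * \<rho>max"
    using alloc_first width_le_max[of 1 i] width_nonneg[OF assms(4), of T] lipschitz_on_nonneg[OF assms(3)]
    by (simp add: mult_left_mono right_diff_distrib[symmetric])
  finally show ?thesis by (simp add: sum_subtractf)
qed

end

theorem theorem4:
  fixes n :: nat and e :: "nat \<Rightarrow> real" and v :: "nat \<Rightarrow> nat \<Rightarrow> real"
    and vmin vmax \<rho>max :: real
    and f :: "nat \<Rightarrow> real \<Rightarrow> real" and \<alpha> \<rho> :: "nat \<Rightarrow> real"
    and u :: "nat \<Rightarrow> real \<Rightarrow> real" and L :: "nat \<Rightarrow> real"
  assumes e_pos: "\<And>i. i < n \<Longrightarrow> e i > 0"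
    and e_sum: "(\<Sum>i<n. e i) = 1"
    and vmin_pos: "vmin > 0"
    and loads: "\<And>i t. i < n \<Longrightarrow> t \<ge> 1 \<Longrightarrow> vmin < v i t \<and> v i t \<le> vmax"
    and vr: "vmax * \<rho>max \<le> 1"
    and f_mono: "\<And>i. i < n \<Longrightarrow> mono_on {0..} (f i)"
    and rho_range: "\<And>i. i < n \<Longrightarrow> 0 \<le> \<rho> i \<and> \<rho> i \<le> \<rho>max"
    and rho_thr: "\<And>i. i < n \<Longrightarrow> f i (\<rho> i) = \<alpha> i"
    and rho_below: "\<And>i x. i < n \<Longrightarrow> 0 \<le> x \<Longrightarrow> x < \<rho> i \<Longrightarrow> f i x < \<alpha> i"
    and u_incr: "\<And>i. i < n \<Longrightarrow> strict_mono_on {0..\<rho> i} (u i)"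
    and u_const: "\<And>i x. i < n \<Longrightarrow> \<rho> i \<le> x \<Longrightarrow> u i x = u i (\<rho> i)"
    and u_lip: "\<And>i. i < n \<Longrightarrow> lipschitz_on (L i) {0..} (u i)"
  shows "(\<forall>T\<ge>1. (\<Sum>t=1..T. loss n (\<lambda>i. v i t * \<rho> i) (m4_allocation n e v f \<alpha> \<rho>max t))
              \<le> 1 + 2 * real n * vmax * \<rho>max)
       \<and> (\<forall>i<n. \<forall>T\<ge>1.
            (\<Sum>t=1..T. u i (e i / v i t))
            - (\<Sum>t=1..T. u i (m4_allocation n e v f \<alpha> \<rho>max t i / v i t))
            \<le> L i * \<rho>max)"
proof -
  interpret truthful_m4 n e v vmax \<rho>max f \<alpha> \<rho>
    using e_pos e_sum loads vmin_pos f_mono rho_range rho_thr rho_below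
    by unfold_locales fastforce+
  have "(\<Sum>t=1..T. loss n (\<lambda>i. v i t * \<rho> i) (m4_allocation n e v f \<alpha> \<rho>max t))
      \<le> 1 + 2 * real n * vmax * \<rho>max" if "1 \<le> T" for T
    using loss_sum_le[OF that] n_vmax_rhomax_nonneg by simp
  moreover have "(\<Sum>t=1..T. u i (e i / v i t))
      - (\<Sum>t=1..T. u i (m4_allocation n e v f \<alpha> \<rho>max t i / v i t)) \<le> L i * \<rho>max"
    if "i < n" "1 \<le> T" for i T
    using utility_gap_sum_le[OF mono_on_if_strict_mono_on_then_const[OF u_incr u_const]
        u_const u_lip] that
    by blast
  ultimately show ?thesis by blast
qed

end
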